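(* Consider the replace-after-random-time process with failure rate $\lambda>0$ and replacement-time density $f$. If there exist $\epsilon>0$ and $\delta>0$ such that $f(r)<r^{\epsilon}$ for all $0<r<\delta$, then $E[N(t)]<\infty$ for every $t>0$.
   Context: Let $X_1,X_2,\ldots$ be independent random variables, each exponentially distributed with rate $\lambda>0$ (density $\lambda e^{-\lambda x}$ for $x>0$). Let $R$ be a random variable, independent of $X_1,X_2,\ldots$, with an absolutely continuous distribution on $(0,\infty)$ with probability density function $f$. For $t\ge0$ define $N(t)=\max\{n\ge0:\sum_{k=1}^n\min(X_k,R)\le t\}$; $\{N(t)\}$ is called the replace-after-random-time (RaRT) process. *)

theory Defs
  imports "HOL-Probability.Probability"
begin

text \<open>The inter-renewal times X_1, X_2, ... are indexed here from 0, i.e. X 0, X 1, ...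
  N(t) = max {n \<ge> 0. sum_{k<n} min (X k) R \<le> t}, taken as a supremum in ennreal
  (which equals the maximum whenever the set is finite).\<close>
definition RaRT_count ::
  "(nat \<Rightarrow> 'a \<Rightarrow> real) \<Rightarrow> ('a \<Rightarrow> real) \<Rightarrow> real \<Rightarrow> 'a \<Rightarrow> ennreal" where
  "RaRT_count X R t \<omega> =
     Sup {of_nat n | n. (\<Sum>k<n. min (X k \<omega>) (R \<omega>)) \<le> t}"

end

theory Submission
  imports Defs
begin

text \<open>
  Truncating the inter-renewal times at a level s \<le> R only shortens them, so N(t) \<ge> n forces
  \<Sum>k<m. min (X k) s \<le> t for all m < n, and the exponential Chebyshev trick gives
  N(t) \<le> \<Sum>m. e^t \<Prod>k<m. exp (- min (X k) s). The factors are independent of each other and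
  of R, with mean at most 1 - (1 - e^-s) e^(-s l) \<le> 1 - s / (2 e^l) for s \<le> 1; summing the
  geometric series, the event s \<le> R contributes at most 2 e^(t + l) / s times its probability
  to E[N(t)]. Splitting the range of R into the dyadic intervals [a 2^-(j+1), a 2^-j) and [a, \<infinity>),
  the bound f(r) < r^\<epsilon> makes the j-th interval contribute O(2^(-j \<epsilon>)), a summable sequence.
\<close>

lemma AE_distributed_notin:
  fixes X :: "'a \<Rightarrow> real" and g :: "real \<Rightarrow> ennreal"
  assumes D: "distributed M lborel X g" and A: "A \<in> sets borel"
    and g: "\<And>x. x \<in> A \<Longrightarrow> g x = 0"
  shows "AE \<omega> in M. X \<omega> \<notin> A"
proof (rule AE_I')
  have "emeasure M (X -` A \<inter> space M) = (\<integral>\<^sup>+x. g x * indicator A x \<partial>lborel)"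
    using D A by (intro distributed_emeasure) auto
  also have "\<dots> = 0"
    by (intro nn_integral_zero' AE_I2) (auto simp: g indicator_def)
  finally have "emeasure M (X -` A \<inter> space M) = 0" .
  moreover have "X -` A \<inter> space M \<in> sets M"
    using A by (intro measurable_sets[OF distributed_measurable[OF D]]) simp
  ultimately show "X -` A \<inter> space M \<in> null_sets M" by (rule null_setsI)
qed blast

lemma emeasure_distributed_Ico_le:
  fixes R :: "'a \<Rightarrow> real" and f :: "real \<Rightarrow> real"
  assumes R: "distributed M lborel R f" and uv: "u \<le> v" and c: "0 \<le> c"
    and f_le: "\<And>x. u \<le> x \<Longrightarrow> x < v \<Longrightarrow> f x \<le> c"
  shows "emeasure M (R -` {u..<v} \<inter> space M) \<le> ennreal (c * (v - u))"
proof -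
  have "emeasure M (R -` {u..<v} \<inter> space M) = (\<integral>\<^sup>+x. ennreal (f x) * indicator {u..<v} x \<partial>lborel)"
    by (rule distributed_emeasure[OF R]) simp
  also have "\<dots> \<le> (\<integral>\<^sup>+x. ennreal c * indicator {u..<v} x \<partial>lborel)"
    by (intro nn_integral_mono) (auto simp: indicator_def f_le ennreal_leI)
  also have "\<dots> = ennreal c * emeasure lborel {u..<v}"
    by (rule nn_integral_cmult_indicator) simp
  also have "\<dots> = ennreal (c * (v - u))"
    using uv c by (simp add: ennreal_mult)
  finally show ?thesis .
qed

lemma (in prob_space) nn_integral_exp_neg_min_le:
  fixes X :: "'a \<Rightarrow> real"
  assumes D: "distributed M lborel X (exponential_density l)" and l: "0 < l" and s: "0 < s"
  shows "(\<integral>\<^sup>+\<omega>. ennreal (exp (- min (X \<omega>) s)) \<partial>M)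
    \<le> ennreal (1 - (1 - exp (- s)) * exp (- s * l))"
proof -
  define c where "c = 1 - exp (- s)"
  define A where "A = {\<omega>\<in>space M. s < X \<omega>}"
  have [measurable]: "X \<in> borel_measurable M"
    using distributed_measurable[OF D] by simp
  have A_sets: "A \<in> sets M" unfolding A_def by measurable
  have c: "0 \<le> c" "c \<le> 1" using s by (auto simp: c_def)
  have X_nonneg: "AE \<omega> in M. X \<omega> \<notin> {..<0}"
    by (rule AE_distributed_notin[OF D]) (auto simp: exponential_density_def)
  have "(\<integral>\<^sup>+\<omega>. ennreal (exp (- min (X \<omega>) s)) \<partial>M) \<le> (\<integral>\<^sup>+\<omega>. ennreal (1 - c * indicator A \<omega>) \<partial>M)"
  proof (rule nn_integral_mono_AE)
    show "AE \<omega> in M. ennreal (exp (- min (X \<omega>) s)) \<le> ennreal (1 - c * indicator A \<omega>)"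
      using X_nonneg
    proof eventually_elim
      case (elim \<omega>)
      show ?case
      proof (cases "\<omega> \<in> A")
        case True
        then show ?thesis by (simp add: A_def c_def)
      next
        case False
        have "exp (- min (X \<omega>) s) \<le> 1" using elim s by simp
        then show ?thesis using False by (simp add: ennreal_leI)
      qed
    qed
  qed
  also have "\<dots> = ennreal (1 - c * prob A)"
  proof -
    have int: "integrable M (\<lambda>\<omega>. c * indicator A \<omega>)"
      using A_sets by (intro integrable_real_mult_indicator) auto
    have "(\<integral>\<^sup>+\<omega>. ennreal (1 - c * indicator A \<omega>) \<partial>M) = ennreal (\<integral>\<omega>. 1 - c * indicator A \<omega> \<partial>M)"
      using c by (intro nn_integral_eq_integral Bochner_Integration.integrable_diff
          integrable_const int AE_I2) (simp add: indicator_def)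
    also have "(\<integral>\<omega>. 1 - c * indicator A \<omega> \<partial>M) = 1 - c * prob A"
      using A_sets
      by (simp add: Bochner_Integration.integral_diff[OF integrable_const int] prob_space)
    finally show ?thesis .
  qed
  also have "prob A = exp (- s * l)"
    unfolding A_def by (rule exponential_distributedD_gt[OF D _ l]) (use s in simp)
  finally show ?thesis by (simp add: c_def)
qed

lemma exp_div_gap_le:
  fixes s l t :: real
  assumes s: "0 < s" "s \<le> 1" and l: "0 < l"
  shows "exp t / ((1 - exp (- s)) * exp (- s * l)) \<le> 2 * exp (t + l) / s"
proof -
  have "exp (- s) \<le> 1 / (1 + s)"
    using exp_ge_add_one_self[of s] s by (simp add: exp_minus divide_simps)
  also have "1 / (1 + s) \<le> 1 - s / 2"
    using s by (simp add: divide_simps algebra_simps mult_left_le_one_le)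
  finally have "s / 2 \<le> 1 - exp (- s)" by simp
  moreover have "exp (- l) \<le> exp (- s * l)" using s l by (simp add: mult_left_le_one_le)
  ultimately have gap: "s / 2 * exp (- l) \<le> (1 - exp (- s)) * exp (- s * l)"
    using s by (intro mult_mono) auto
  have "exp t / ((1 - exp (- s)) * exp (- s * l)) \<le> exp t / (s / 2 * exp (- l))"
    using gap s by (intro divide_left_mono) auto
  also have "\<dots> = 2 * exp (t + l) / s"
    by (simp add: exp_add exp_minus field_simps)
  finally show ?thesis .
qed

lemma suminf_ennreal_geometric:
  fixes c q :: real
  assumes c: "0 \<le> c" and q: "0 \<le> q" "q < 1"
  shows "(\<Sum>m. ennreal (c * q ^ m)) = ennreal (c / (1 - q))"
proof -
  have "summable (\<lambda>m. c * q ^ m)"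
    using q by (intro summable_mult summable_geometric) auto
  then have "(\<Sum>m. ennreal (c * q ^ m)) = ennreal (\<Sum>m. c * q ^ m)"
    using c q by (intro suminf_ennreal2) auto
  also have "(\<Sum>m. c * q ^ m) = c / (1 - q)"
    using q by (simp add: suminf_mult suminf_geometric divide_simps)
  finally show ?thesis .
qed

lemma (in prob_space) indep_vars_nn_integral_indicator_prod:
  fixes X :: "nat \<Rightarrow> 'a \<Rightarrow> real" and R :: "'a \<Rightarrow> real"
  assumes indep: "indep_vars (\<lambda>_. borel) (\<lambda>i. case i of None \<Rightarrow> R | Some k \<Rightarrow> X k) UNIV"
    and B[measurable]: "B \<in> sets borel"
  shows "(\<integral>\<^sup>+\<omega>. ennreal (indicator B (R \<omega>) * (\<Prod>k<m. exp (- min (X k \<omega>) s))) \<partial>M)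
    = emeasure M (R -` B \<inter> space M) * (\<Prod>k<m. \<integral>\<^sup>+\<omega>. ennreal (exp (- min (X k \<omega>) s)) \<partial>M)"
proof -
  define Z where "Z i = (case i of None \<Rightarrow> R | Some k \<Rightarrow> X k)" for i
  define Y where "Y i = (case i of None \<Rightarrow> (\<lambda>x. ennreal (indicator B x))
    | Some k \<Rightarrow> (\<lambda>x. ennreal (exp (- min x s))))" for i :: "nat option"
  define I where "I = insert None (Some ` {..<m})"
  have None: "None \<notin> Some ` {..<m}" by auto
  have "indep_vars (\<lambda>_. borel) (\<lambda>i \<omega>. Y i (Z i \<omega>)) UNIV"
    using indep unfolding Z_def
    by (rule indep_vars_compose2)
      (auto simp: Y_def B borel_measurable_indicator split: option.splits)
  then have indep_I: "indep_vars (\<lambda>_. borel) (\<lambda>i \<omega>. Y i (Z i \<omega>)) I"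
    by (rule indep_vars_subset) simp
  have "(\<integral>\<^sup>+\<omega>. (\<Prod>i\<in>I. Y i (Z i \<omega>)) \<partial>M) = (\<Prod>i\<in>I. \<integral>\<^sup>+\<omega>. Y i (Z i \<omega>) \<partial>M)"
    by (rule indep_vars_nn_integral[OF _ indep_I]) (simp_all add: I_def)
  moreover have "(\<Prod>i\<in>I. Y i (Z i \<omega>)) = ennreal (indicator B (R \<omega>) * (\<Prod>k<m. exp (- min (X k \<omega>) s)))"
    for \<omega>
    by (simp add: I_def Y_def Z_def prod.insert[OF _ None] prod.reindex prod_ennreal
        ennreal_mult' prod_nonneg)
  moreover have "(\<integral>\<^sup>+\<omega>. ennreal (indicator B (R \<omega>)) \<partial>M) = emeasure M (R -` B \<inter> space M)"
  proof -
    have [measurable]: "R \<in> borel_measurable M"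
      using indep unfolding indep_vars_def by (metis option.simps(4) UNIV_I)
    have "(\<integral>\<^sup>+\<omega>. ennreal (indicator B (R \<omega>)) \<partial>M) = (\<integral>\<^sup>+\<omega>. indicator (R -` B \<inter> space M) \<omega> \<partial>M)"
      by (rule nn_integral_cong) (auto simp: indicator_def)
    also have "\<dots> = emeasure M (R -` B \<inter> space M)"
      by (intro nn_integral_indicator) measurable
    finally show ?thesis .
  qed
  ultimately show ?thesis
    by (simp add: I_def Y_def Z_def prod.insert[OF _ None] prod.reindex)
qed

lemma (in prob_space) nn_integral_indicator_prod_exp_neg_min_le:
  fixes X :: "nat \<Rightarrow> 'a \<Rightarrow> real" and R :: "'a \<Rightarrow> real"
  assumes l: "0 < l" and X: "\<And>k. distributed M lborel (X k) (exponential_density l)"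
    and indep: "indep_vars (\<lambda>_. borel) (\<lambda>i. case i of None \<Rightarrow> R | Some k \<Rightarrow> X k) UNIV"
    and B: "B \<in> sets borel" and s: "0 < s"
  shows "(\<integral>\<^sup>+\<omega>. ennreal (indicator B (R \<omega>) * (\<Prod>k<m. exp (- min (X k \<omega>) s))) \<partial>M)
    \<le> emeasure M (R -` B \<inter> space M) * ennreal ((1 - (1 - exp (- s)) * exp (- s * l)) ^ m)"
proof -
  define q where "q = 1 - (1 - exp (- s)) * exp (- s * l)"
  have "0 \<le> q"
    using s l by (auto simp: q_def intro!: mult_le_one)
  have "(\<Prod>k<m. \<integral>\<^sup>+\<omega>. ennreal (exp (- min (X k \<omega>) s)) \<partial>M) \<le> (\<Prod>k<m. ennreal q)"
    by (rule prod_mono_ennreal) (use nn_integral_exp_neg_min_le[OF X l s] in \<open>simp add: q_def\<close>)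
  also have "\<dots> = ennreal (q ^ m)"
    using \<open>0 \<le> q\<close> by (simp add: ennreal_power)
  finally show ?thesis
    unfolding indep_vars_nn_integral_indicator_prod[OF indep B] q_def[symmetric]
    by (rule mult_left_mono) simp
qed

lemma RaRT_count_le_exp_series:
  assumes X: "\<And>k. 0 \<le> X k \<omega>" and s: "0 \<le> s" "s \<le> R \<omega>"
  shows "RaRT_count X R t \<omega> \<le> (\<Sum>m. ennreal (exp t * (\<Prod>k<m. exp (- min (X k \<omega>) s))))"
  unfolding RaRT_count_def
proof (rule Sup_least, clarify)
  fix n assume n: "(\<Sum>k<n. min (X k \<omega>) (R \<omega>)) \<le> t"
  have "1 \<le> exp t * (\<Prod>k<m. exp (- min (X k \<omega>) s))" if "m < n" for m
  proof -
    have "(\<Sum>k<m. min (X k \<omega>) s) \<le> (\<Sum>k<m. min (X k \<omega>) (R \<omega>))"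
      by (rule sum_mono) (use s in auto)
    also have "\<dots> \<le> (\<Sum>k<n. min (X k \<omega>) (R \<omega>))"
      by (rule sum_mono2) (use that X s in auto)
    finally have "1 \<le> exp (t - (\<Sum>k<m. min (X k \<omega>) s))" using n by simp
    also have "\<dots> = exp t * (\<Prod>k<m. exp (- min (X k \<omega>) s))"
      by (simp add: exp_diff exp_sum exp_minus prod_dividef field_simps)
    finally show ?thesis .
  qed
  then have "(of_nat n :: ennreal) \<le> (\<Sum>m<n. ennreal (exp t * (\<Prod>k<m. exp (- min (X k \<omega>) s))))"
    using sum_mono[of "{..<n}" "\<lambda>_. ennreal 1"] by (simp add: ennreal_leI)
  also have "\<dots> \<le> (\<Sum>m. ennreal (exp t * (\<Prod>k<m. exp (- min (X k \<omega>) s))))"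
    by (rule sum_le_suminf) (auto intro: summableI)
  finally show "of_nat n \<le> (\<Sum>m. ennreal (exp t * (\<Prod>k<m. exp (- min (X k \<omega>) s))))" .
qed

lemma Sup_of_nat_eq_SUP_if:
  "Sup {of_nat n | n. P n} = (SUP n. if P n then of_nat n else (0::ennreal))"
proof (rule antisym)
  show "Sup {of_nat n | n. P n} \<le> (SUP n. if P n then of_nat n else (0::ennreal))"
  proof (rule Sup_least, clarify)
    fix n assume "P n"
    then show "of_nat n \<le> (SUP n. if P n then of_nat n else (0::ennreal))"
      by (intro SUP_upper2[of n]) auto
  qed
  show "(SUP n. if P n then of_nat n else 0) \<le> Sup {of_nat n :: ennreal | n. P n}"
    by (rule SUP_least) (auto intro: Sup_upper)
qed

lemma borel_measurable_RaRT_count[measurable]: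
  assumes [measurable]: "\<And>k. X k \<in> borel_measurable M" "R \<in> borel_measurable M"
  shows "RaRT_count X R t \<in> borel_measurable M"
  unfolding RaRT_count_def Sup_of_nat_eq_SUP_if by (intro borel_measurable_SUP) measurable

lemma (in prob_space) nn_integral_indicator_RaRT_count_le:
  fixes X :: "nat \<Rightarrow> 'a \<Rightarrow> real" and R :: "'a \<Rightarrow> real"
  assumes l: "0 < l" and X: "\<And>k. distributed M lborel (X k) (exponential_density l)"
    and indep: "indep_vars (\<lambda>_. borel) (\<lambda>i. case i of None \<Rightarrow> R | Some k \<Rightarrow> X k) UNIV"
    and B[measurable]: "B \<in> sets borel" and B_ge: "B \<subseteq> {s..}" and s: "0 < s"
  shows "(\<integral>\<^sup>+\<omega>. indicator B (R \<omega>) * RaRT_count X R t \<omega> \<partial>M)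
    \<le> emeasure M (R -` B \<inter> space M) * ennreal (exp t / ((1 - exp (- s)) * exp (- s * l)))"
proof -
  define q where "q = 1 - (1 - exp (- s)) * exp (- s * l)"
  define T where "T m \<omega> = ennreal (indicator B (R \<omega>) * (\<Prod>k<m. exp (- min (X k \<omega>) s)))" for m \<omega>
  have [measurable]: "X k \<in> borel_measurable M" for k
    using distributed_measurable[OF X[of k]] by simp
  have [measurable]: "R \<in> borel_measurable M"
    using indep unfolding indep_vars_def by (metis option.simps(4) UNIV_I)
  have q: "0 \<le> q" "q < 1"
    using s l by (auto simp: q_def intro!: mult_le_one)
  have "AE \<omega> in M. X k \<omega> \<notin> {..<0}" for k
    by (rule AE_distributed_notin[OF X]) (auto simp: exponential_density_def)
  then have AE_X: "AE \<omega> in M. \<forall>k. 0 \<le> X k \<omega>"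
    by (simp add: AE_all_countable not_less)
  have "(\<integral>\<^sup>+\<omega>. indicator B (R \<omega>) * RaRT_count X R t \<omega> \<partial>M)
      \<le> (\<integral>\<^sup>+\<omega>. (\<Sum>m. ennreal (exp t) * T m \<omega>) \<partial>M)"
  proof (rule nn_integral_mono_AE)
    show "AE \<omega> in M. indicator B (R \<omega>) * RaRT_count X R t \<omega> \<le> (\<Sum>m. ennreal (exp t) * T m \<omega>)"
      using AE_X
    proof eventually_elim
      case (elim \<omega>)
      show ?case
      proof (cases "R \<omega> \<in> B")
        case True
        then have "RaRT_count X R t \<omega> \<le> (\<Sum>m. ennreal (exp t * (\<Prod>k<m. exp (- min (X k \<omega>) s))))"
          using B_ge s elim by (intro RaRT_count_le_exp_series) auto
        with True show ?thesis by (simp add: T_def ennreal_mult')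
      qed simp
    qed
  qed
  also have "\<dots> = (\<Sum>m. \<integral>\<^sup>+\<omega>. ennreal (exp t) * T m \<omega> \<partial>M)"
    by (rule nn_integral_suminf) (simp add: T_def)
  also have "\<dots> = (\<Sum>m. ennreal (exp t) * \<integral>\<^sup>+\<omega>. T m \<omega> \<partial>M)"
    by (simp add: T_def nn_integral_cmult)
  also have "\<dots> \<le> (\<Sum>m. emeasure M (R -` B \<inter> space M) * ennreal (exp t * q ^ m))"
  proof (intro suminf_le summableI)
    fix m
    have "(\<integral>\<^sup>+\<omega>. T m \<omega> \<partial>M) \<le> emeasure M (R -` B \<inter> space M) * ennreal (q ^ m)"
      unfolding T_def q_def by (rule nn_integral_indicator_prod_exp_neg_min_le[OF l X indep B s])
    then show "ennreal (exp t) * (\<integral>\<^sup>+\<omega>. T m \<omega> \<partial>M)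
        \<le> emeasure M (R -` B \<inter> space M) * ennreal (exp t * q ^ m)"
      using q by (simp add: ennreal_mult mult_left_mono mult.left_commute)
  qed
  also have "\<dots> = emeasure M (R -` B \<inter> space M) * ennreal (exp t / (1 - q))"
    by (simp only: ennreal_suminf_cmult suminf_ennreal_geometric[OF exp_ge_zero q])
  finally show ?thesis by (simp add: q_def)
qed

definition dyadic_bucket :: "real \<Rightarrow> nat \<Rightarrow> real set" where
  "dyadic_bucket a j = (case j of 0 \<Rightarrow> {a..} | Suc i \<Rightarrow> {a / 2 ^ Suc i ..< a / 2 ^ i})"

lemma sets_borel_dyadic_bucket[measurable]: "dyadic_bucket a j \<in> sets borel"
  by (simp add: dyadic_bucket_def split: nat.split)

lemma dyadic_bucket_cover:
  fixes a r :: real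
  assumes a: "0 < a" and r: "0 < r"
  shows "\<exists>j. r \<in> dyadic_bucket a j"
proof (cases "a \<le> r")
  case True
  then have "r \<in> dyadic_bucket a 0" by (simp add: dyadic_bucket_def)
  then show ?thesis ..
next
  case False
  obtain n where "(1 / 2) ^ n < r / a"
    using real_arch_pow_inv[of "r / a" "1 / 2"] a r by auto
  then have ex: "\<exists>n. a / 2 ^ n \<le> r"
    using a by (auto simp: power_one_over field_simps intro: less_imp_le)
  define j where "j = (LEAST n. a / 2 ^ n \<le> r)"
  have j: "a / 2 ^ j \<le> r"
    unfolding j_def by (rule LeastI_ex[OF ex])
  then obtain i where i: "j = Suc i"
    using False by (cases j) auto
  have "i < j" using i by simp
  then have "\<not> a / 2 ^ i \<le> r"
    unfolding j_def by (rule not_less_Least)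
  then have "r \<in> dyadic_bucket a (Suc i)"
    using i j by (simp add: dyadic_bucket_def)
  then show ?thesis ..
qed

lemma le_suminf_indicator_dyadic_bucket:
  fixes x :: ennreal
  assumes "0 < a" "0 < r"
  shows "x \<le> (\<Sum>j. indicator (dyadic_bucket a j) r * x)"
proof -
  obtain j where j: "r \<in> dyadic_bucket a j"
    using dyadic_bucket_cover[OF assms] by blast
  have "(\<Sum>i\<in>{j}. indicator (dyadic_bucket a i) r * x) \<le> (\<Sum>i. indicator (dyadic_bucket a i) r * x)"
    by (rule sum_le_suminf) (auto intro: summableI)
  with j show ?thesis by simp
qed

lemma nn_integral_le_suminf_dyadic_bucket:
  assumes a: "0 < a" and R_pos: "AE \<omega> in M. 0 < R \<omega>"
    and [measurable]: "R \<in> borel_measurable M" "g \<in> borel_measurable M"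
  shows "(\<integral>\<^sup>+\<omega>. g \<omega> \<partial>M) \<le> (\<Sum>j. \<integral>\<^sup>+\<omega>. indicator (dyadic_bucket a j) (R \<omega>) * g \<omega> \<partial>M)"
proof -
  have "AE \<omega> in M. g \<omega> \<le> (\<Sum>j. indicator (dyadic_bucket a j) (R \<omega>) * g \<omega>)"
    using R_pos by eventually_elim (rule le_suminf_indicator_dyadic_bucket[OF a])
  then have "(\<integral>\<^sup>+\<omega>. g \<omega> \<partial>M) \<le> (\<integral>\<^sup>+\<omega>. (\<Sum>j. indicator (dyadic_bucket a j) (R \<omega>) * g \<omega>) \<partial>M)"
    by (rule nn_integral_mono_AE)
  also have "\<dots> = (\<Sum>j. \<integral>\<^sup>+\<omega>. indicator (dyadic_bucket a j) (R \<omega>) * g \<omega> \<partial>M)"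
    by (rule nn_integral_suminf) measurable
  finally show ?thesis .
qed

lemma (in prob_space) nn_integral_RaRT_count_dyadic_bucket_le:
  fixes X :: "nat \<Rightarrow> 'a \<Rightarrow> real" and R :: "'a \<Rightarrow> real" and f :: "real \<Rightarrow> real"
  assumes l: "0 < l" and X: "\<And>k. distributed M lborel (X k) (exponential_density l)"
    and indep: "indep_vars (\<lambda>_. borel) (\<lambda>i. case i of None \<Rightarrow> R | Some k \<Rightarrow> X k) UNIV"
    and R: "distributed M lborel R f"
    and f_small: "\<And>r. 0 < r \<Longrightarrow> r < \<delta> \<Longrightarrow> f r < r powr \<epsilon>" and \<epsilon>: "0 \<le> \<epsilon>"
    and a: "0 < a" "a \<le> 1" "a \<le> \<delta>"
  shows "(\<integral>\<^sup>+\<omega>. indicator (dyadic_bucket a j) (R \<omega>) * RaRT_count X R t \<omega> \<partial>M)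
    \<le> ennreal (2 * exp (t + l) * (1 / a + (2 * a) powr \<epsilon>) * (1 / 2 powr \<epsilon>) ^ j)"
proof (cases j)
  case 0
  have "(\<integral>\<^sup>+\<omega>. indicator (dyadic_bucket a j) (R \<omega>) * RaRT_count X R t \<omega> \<partial>M)
      \<le> emeasure M (R -` {a..} \<inter> space M) * ennreal (exp t / ((1 - exp (- a)) * exp (- a * l)))"
    using nn_integral_indicator_RaRT_count_le[OF l X indep, of "{a..}" a t] a 0
    by (simp add: dyadic_bucket_def)
  also have "\<dots> \<le> 1 * ennreal (2 * exp (t + l) / a)"
    using a l by (intro mult_mono emeasure_le_1 ennreal_leI exp_div_gap_le) auto
  also have "\<dots> \<le> ennreal (2 * exp (t + l) * (1 / a + (2 * a) powr \<epsilon>) * (1 / 2 powr \<epsilon>) ^ j)"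
    using 0 a by (simp add: distrib_left)
  finally show ?thesis .
next
  case (Suc i)
  define u where "u = a / 2 ^ Suc i"
  define v where "v = a / 2 ^ i"
  have le_a: "a / 2 ^ n \<le> a" for n :: nat
    using a by (simp add: divide_le_eq mult_le_cancel_left1)
  have u: "0 < u" "u \<le> 1"
    using a le_a[of "Suc i"] unfolding u_def by (simp, linarith)
  have v: "v = 2 * u" "v \<le> \<delta>"
    using a le_a[of i] unfolding u_def v_def by auto
  have bucket: "dyadic_bucket a j = {u..<v}"
    by (simp add: Suc dyadic_bucket_def u_def v_def)
  have "(\<integral>\<^sup>+\<omega>. indicator (dyadic_bucket a j) (R \<omega>) * RaRT_count X R t \<omega> \<partial>M)
      \<le> emeasure M (R -` {u..<v} \<inter> space M) * ennreal (exp t / ((1 - exp (- u)) * exp (- u * l)))"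
    unfolding bucket by (rule nn_integral_indicator_RaRT_count_le[OF l X indep _ _ u(1)]) auto
  also have "\<dots> \<le> ennreal (v powr \<epsilon> * (v - u)) * ennreal (2 * exp (t + l) / u)"
  proof (intro mult_mono emeasure_distributed_Ico_le[OF R] ennreal_leI exp_div_gap_le)
    show "f x \<le> v powr \<epsilon>" if "u \<le> x" "x < v" for x
      using f_small[of x] powr_mono2[of \<epsilon> x v] that u v \<epsilon> by auto
  qed (use u v l in auto)
  also have "\<dots> = ennreal (2 * exp (t + l) * v powr \<epsilon>)"
    using u v by (simp flip: ennreal_mult)
  also have "v powr \<epsilon> = (2 * a) powr \<epsilon> * (1 / 2 powr \<epsilon>) ^ j"
  proof -
    have "(2 ^ i :: real) powr \<epsilon> = (2 powr \<epsilon>) ^ i"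
      by (simp add: powr_power powr_realpow[symmetric] powr_powr mult.commute)
    then show ?thesis
      using a by (simp add: Suc v_def powr_divide powr_mult power_one_over field_simps)
  qed
  also have "ennreal (2 * exp (t + l) * ((2 * a) powr \<epsilon> * (1 / 2 powr \<epsilon>) ^ j))
      \<le> ennreal (2 * exp (t + l) * (1 / a + (2 * a) powr \<epsilon>) * (1 / 2 powr \<epsilon>) ^ j)"
    unfolding mult.assoc by (intro ennreal_leI mult_left_mono mult_right_mono) (use a in auto)
  finally show ?thesis .
qed

theorem mainTheorem11:
  fixes M :: "'a measure"
    and X :: "nat \<Rightarrow> 'a \<Rightarrow> real"
    and R :: "'a \<Rightarrow> real"
    and f :: "real \<Rightarrow> real"
    and l :: real
  assumes "prob_space M"
    and "l > 0"
    and "\<And>k. distributed M lborel (X k) (\<lambda>x. ennreal (exponential_density l x))"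
    and "distributed M lborel R (\<lambda>x. ennreal (f x))"
    and "\<And>x. f x \<ge> 0"
    and "\<And>x. x \<le> 0 \<Longrightarrow> f x = 0"
    and "prob_space.indep_vars M (\<lambda>_. borel)
           (\<lambda>i. case i of None \<Rightarrow> R | Some k \<Rightarrow> X k) UNIV"
    and "\<exists>\<epsilon>>0. \<exists>\<delta>>0. \<forall>r. 0 < r \<and> r < \<delta> \<longrightarrow> f r < r powr \<epsilon>"
  shows "\<forall>t>0. (\<integral>\<^sup>+ \<omega>. RaRT_count X R t \<omega> \<partial>M) < \<infinity>"
proof -
  interpret prob_space M by fact
  obtain \<epsilon> \<delta> where \<epsilon>: "0 < \<epsilon>" and \<delta>: "0 < \<delta>"
    and f_small: "\<And>r. 0 < r \<Longrightarrow> r < \<delta> \<Longrightarrow> f r < r powr \<epsilon>"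
    using assms(8) by blast
  define a where "a = min 1 \<delta>"
  define \<rho> where "\<rho> = 1 / 2 powr \<epsilon>"
  have a: "0 < a" "a \<le> 1" "a \<le> \<delta>" and \<rho>: "0 \<le> \<rho>" "\<rho> < 1"
    using \<delta> \<epsilon> by (auto simp: a_def \<rho>_def)
  have [measurable]: "X k \<in> borel_measurable M" "R \<in> borel_measurable M" for k
    using distributed_measurable[OF assms(3)[of k]] distributed_measurable[OF assms(4)] by simp_all
  have "AE \<omega> in M. R \<omega> \<notin> {..0}"
    by (rule AE_distributed_notin[OF assms(4)]) (auto simp: assms(6))
  then have R_pos: "AE \<omega> in M. 0 < R \<omega>"
    by (simp add: not_le)
  have "(\<integral>\<^sup>+ \<omega>. RaRT_count X R t \<omega> \<partial>M) < \<infinity>" for t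
  proof -
    define K where "K = 2 * exp (t + l) * (1 / a + (2 * a) powr \<epsilon>)"
    have "(\<integral>\<^sup>+ \<omega>. RaRT_count X R t \<omega> \<partial>M)
        \<le> (\<Sum>j. \<integral>\<^sup>+ \<omega>. indicator (dyadic_bucket a j) (R \<omega>) * RaRT_count X R t \<omega> \<partial>M)"
      by (rule nn_integral_le_suminf_dyadic_bucket[OF a(1) R_pos]) measurable
    also have "\<dots> \<le> (\<Sum>j. ennreal (K * \<rho> ^ j))"
      using nn_integral_RaRT_count_dyadic_bucket_le[OF assms(2,3,7,4) f_small _ a] \<epsilon>
      unfolding K_def \<rho>_def by (intro suminf_le summableI) auto
    also have "\<dots> = ennreal (K / (1 - \<rho>))"
      using \<rho> a by (intro suminf_ennreal_geometric) (auto simp: K_def)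
    finally show ?thesis
      by (simp add: order_le_less_trans)
  qed
  then show ?thesis by blast
qed

end
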